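(* Assume the setting below, but suppose only that $Y_i(0)\le 0$ for all $i=1,\dots,N$ (rather than $Y_i(0)=0$). Then the following conclusions remain true. (i) For every $1\le k\le N$ and $c\in\mathbb{R}$, $p^{\mathrm H}_{k,c}=G_{\mathrm H}(n(c);N,N-k,N_1)$ satisfies $\Pr(p^{\mathrm H}_{k,c}\le\alpha)\le\alpha$ for all $\alpha\in(0,1)$ whenever $\tau_{(k)}\le c$. (ii) $p^{\mathrm H}_{k,c}$ is non-decreasing in $c$ and non-increasing in $k$. The set $\{c: p^{\mathrm H}_{k,c}>\alpha\}$ equals $[y_{(k(\alpha))},\infty)$, where $k(\alpha)=N_1-Q_{\mathrm H}(1-\alpha;N,N-k,N_1)$, and $\Pr(\tau_{(k)}\ge y_{(k(\alpha))})\ge1-\alpha$. The set $\{N-k:p^{\mathrm H}_{k,c}>\alpha,\ 0\le k\le N\}=\{n_{c,\alpha},\dots,N\}$, where $n_{c,\alpha}=N-\max\{k:G_{\mathrm H}(n(c);N,N-k,N_1)>\alpha,\ 0\le k\le N\}$, and this set contains $N(c)$ with probability at least $1-\alpha$. (iii) For $1\le k_1\le\dots\le k_J\le N$ and $k_j(\alpha)=N_1-Q_{\mathrm H}(1-\alpha;N,N-k_j,N_1)$, $$\Pr\Big(\bigcap_{j=1}^J\{\tau_{(k_j)}\ge y_{(k_j(\alpha))}\}\Big)\ge 1-\Pr\Big(\bigcup_{j=1}^J\Big\{\sum_{i=1}^N Z_i\mathbb{1}(i>k_j)>Q_{\mathrm H}(1-\alpha;N,N-k_j,N_1)\Big\}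\Big).$$
   Context: Setting: - There are $N$ units with fixed potential outcomes $Y_i(1),Y_i(0)$ and ITE $\tau_i=Y_i(1)-Y_i(0)$. - The sorted ITEs are $\tau_{(1)}\le\dots\le\tau_{(N)}$. - CRE: the assignment vector $Z\in\{0,1\}^N$ is uniformly distributed over vectors with exactly $N_1$ ones, where $1\le N_1<N$. - The observed outcome is $Y_i=Z_iY_i(1)+(1-Z_i)Y_i(0)$. - $N(c)=\sum_i\mathbb{1}(\tau_i>c)$ and $n(c)=\sum_iZ_i\mathbb{1}(Y_i>c)$. - $G_{\mathrm H}(x;N,n,N_1)=\Pr(X\ge x)$ and $Q_{\mathrm H}(\theta;N,n,N_1)=\inf\{x:\Pr(X\le x)\ge\theta\}$, for $X$ Hypergeometric with parameters $(N,n,N_1)$ (population size $N$, $n$ marked items, sample size $N_1$). - $y_{(1)}\le\dots\le y_{(N_1)}$ are the sorted observed outcomes of the treated units, with $y_{(0)}=-\infty$. *)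

theory Defs
  imports "HOL-Probability.Probability"
begin

text \<open>Units are indexed by 1..N. An assignment of the CRE is identified with the set
  S of treated units (Z_i = 1 iff i in S).\<close>

definition cre :: "nat \<Rightarrow> nat \<Rightarrow> nat set set" where
  "cre N N1 = {S. S \<subseteq> {1..N} \<and> card S = N1}"

definition Pr_cre :: "nat \<Rightarrow> nat \<Rightarrow> (nat set \<Rightarrow> bool) \<Rightarrow> real" where
  "Pr_cre N N1 P = measure_pmf.prob (pmf_of_set (cre N N1)) {S. P S}"

definition hyp_pmf :: "nat \<Rightarrow> nat \<Rightarrow> nat \<Rightarrow> nat \<Rightarrow> real" where
  "hyp_pmf N n N1 j =
     (if j \<le> N1 then real ((n choose j) * ((N - n) choose (N1 - j))) / real (N choose N1) else 0)"

definition G_H :: "nat \<Rightarrow> nat \<Rightarrow> nat \<Rightarrow> nat \<Rightarrow> real" where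
  "G_H x N n N1 = (\<Sum>j\<in>{x..N1}. hyp_pmf N n N1 j)"

definition hyp_cdf :: "nat \<Rightarrow> nat \<Rightarrow> nat \<Rightarrow> nat \<Rightarrow> real" where
  "hyp_cdf x N n N1 = (\<Sum>j\<in>{..x}. hyp_pmf N n N1 j)"

text \<open>Quantile: the infimum over real x of {x. Pr(X \<le> x) \<ge> \<theta>} is attained at a
  nonnegative integer whenever 0 < \<theta> \<le> 1.\<close>

definition Q_H :: "real \<Rightarrow> nat \<Rightarrow> nat \<Rightarrow> nat \<Rightarrow> nat" where
  "Q_H \<theta> N n N1 = (LEAST x::nat. \<theta> \<le> hyp_cdf x N n N1)"

text \<open>k-th smallest value (1-based) of f over a finite set A.\<close>

definition kth_smallest :: "(nat \<Rightarrow> real) \<Rightarrow> nat set \<Rightarrow> nat \<Rightarrow> real" where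
  "kth_smallest f A k = sort (map f (sorted_list_of_set A)) ! (k - 1)"

definition tau :: "(nat \<Rightarrow> real) \<Rightarrow> (nat \<Rightarrow> real) \<Rightarrow> nat \<Rightarrow> real" where
  "tau Y1 Y0 i = Y1 i - Y0 i"

definition tau_ord :: "(nat \<Rightarrow> real) \<Rightarrow> (nat \<Rightarrow> real) \<Rightarrow> nat \<Rightarrow> nat \<Rightarrow> real" where
  "tau_ord Y1 Y0 N k = kth_smallest (tau Y1 Y0) {1..N} k"

definition obs :: "(nat \<Rightarrow> real) \<Rightarrow> (nat \<Rightarrow> real) \<Rightarrow> nat set \<Rightarrow> nat \<Rightarrow> real" where
  "obs Y1 Y0 S i = (if i \<in> S then Y1 i else Y0 i)"

definition Ncnt :: "(nat \<Rightarrow> real) \<Rightarrow> (nat \<Rightarrow> real) \<Rightarrow> nat \<Rightarrow> real \<Rightarrow> nat" where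
  "Ncnt Y1 Y0 N c = card {i\<in>{1..N}. tau Y1 Y0 i > c}"

definition ncnt :: "(nat \<Rightarrow> real) \<Rightarrow> (nat \<Rightarrow> real) \<Rightarrow> nat set \<Rightarrow> real \<Rightarrow> nat" where
  "ncnt Y1 Y0 S c = card {i\<in>S. obs Y1 Y0 S i > c}"

definition pH :: "(nat \<Rightarrow> real) \<Rightarrow> (nat \<Rightarrow> real) \<Rightarrow> nat \<Rightarrow> nat \<Rightarrow> nat set \<Rightarrow> nat \<Rightarrow> real \<Rightarrow> real" where
  "pH Y1 Y0 N N1 S k c = G_H (ncnt Y1 Y0 S c) N (N - k) N1"

definition y_ord :: "(nat \<Rightarrow> real) \<Rightarrow> (nat \<Rightarrow> real) \<Rightarrow> nat set \<Rightarrow> nat \<Rightarrow> ereal" where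
  "y_ord Y1 Y0 S j = (if j = 0 then -\<infinity> else ereal (kth_smallest (obs Y1 Y0 S) S j))"

definition kalpha :: "real \<Rightarrow> nat \<Rightarrow> nat \<Rightarrow> nat \<Rightarrow> nat" where
  "kalpha \<alpha> N N1 k = N1 - Q_H (1 - \<alpha>) N (N - k) N1"

definition n_ca :: "(nat \<Rightarrow> real) \<Rightarrow> (nat \<Rightarrow> real) \<Rightarrow> nat \<Rightarrow> nat \<Rightarrow> nat set \<Rightarrow> real \<Rightarrow> real \<Rightarrow> nat" where
  "n_ca Y1 Y0 N N1 S c \<alpha> =
     N - Max {k. k \<le> N \<and> G_H (ncnt Y1 Y0 S c) N (N - k) N1 > \<alpha>}"

end

theory Submission
  imports Defs "HOL-Combinatorics.List_Permutation"
begin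

text \<open>Because Y0 \<le> 0, a treated unit with observed outcome above c has \<tau>_i > c, so n(c) is
  at most the number of treated units in any set A of units containing all \<tau>_i > c. When
  \<tau>_(k) \<le> c such an A can be taken of size N - k, and the number of treated units in a fixed
  set of size N - k is hypergeometric (N, N - k, N1); this makes p_{k,c} a valid p-value, and
  the confidence sets are obtained by inverting it through the quantile Q_H. For the
  simultaneous statement, one sorting permutation \<pi> of the units provides the nested sets
  A_k = \<pi>{k+1..N} for all k at once, and relabelling units by \<pi> preserves the law of the
  CRE, which transports the sets A_k to the fixed sets {k+1..N}.\<close>

section \<open>Completely randomized experiments\<close>

lemma finite_cre: "finite (cre N N1)"
  unfolding cre_def by (rule finite_subset[of _ "Pow {1..N}"]) auto

lemma card_cre: "card (cre N N1) = N choose N1"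
  unfolding cre_def using n_subsets[of "{1..N}" N1] by simp

lemma cre_nonempty: "N1 \<le> N \<Longrightarrow> cre N N1 \<noteq> {}"
  using card_cre[of N N1] by (metis binomial_eq_0_iff card.empty not_le)

lemma creD: "S \<in> cre N N1 \<Longrightarrow> S \<subseteq> {1..N} \<and> finite S \<and> card S = N1"
  unfolding cre_def by (auto intro: finite_subset)

lemma Pr_cre_eq_card:
  assumes "N1 \<le> N"
  shows "Pr_cre N N1 P = real (card {S\<in>cre N N1. P S}) / real (N choose N1)"
proof -
  have "{S\<in>cre N N1. P S} = cre N N1 \<inter> {S. P S}" by auto
  then show ?thesis unfolding Pr_cre_def
    using measure_pmf_of_set[OF cre_nonempty[OF assms] finite_cre] card_cre by simp
qed

lemma Pr_cre_mono:
  assumes "N1 \<le> N" "\<And>S. S \<in> cre N N1 \<Longrightarrow> P S \<Longrightarrow> P' S"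
  shows "Pr_cre N N1 P \<le> Pr_cre N N1 P'"
proof -
  have "card {S\<in>cre N N1. P S} \<le> card {S\<in>cre N N1. P' S}"
    by (rule card_mono) (auto intro: finite_subset[OF _ finite_cre] assms(2))
  then show ?thesis unfolding Pr_cre_eq_card[OF assms(1)] by (simp add: divide_right_mono)
qed

lemma Pr_cre_cong:
  assumes "N1 \<le> N" "\<And>S. S \<in> cre N N1 \<Longrightarrow> P S = P' S"
  shows "Pr_cre N N1 P = Pr_cre N N1 P'"
proof -
  have "{S\<in>cre N N1. P S} = {S\<in>cre N N1. P' S}" using assms(2) by auto
  then show ?thesis unfolding Pr_cre_eq_card[OF assms(1)] by simp
qed

lemma Pr_cre_not:
  assumes "N1 \<le> N"
  shows "Pr_cre N N1 (\<lambda>S. \<not> P S) = 1 - Pr_cre N N1 P"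
proof -
  have "{S\<in>cre N N1. \<not> P S} = cre N N1 - {S\<in>cre N N1. P S}" by auto
  then have "card {S\<in>cre N N1. \<not> P S} = card (cre N N1) - card {S\<in>cre N N1. P S}"
    by (simp only:) (rule card_Diff_subset; auto intro: finite_subset[OF _ finite_cre])
  moreover have "card {S\<in>cre N N1. P S} \<le> card (cre N N1)"
    by (rule card_mono[OF finite_cre]) auto
  moreover have "real (N choose N1) > 0" using assms by simp
  ultimately show ?thesis unfolding Pr_cre_eq_card[OF assms] card_cre
    by (simp add: of_nat_diff field_simps)
qed

lemma Pr_cre_image_bij:
  assumes \<pi>: "bij_betw \<pi> {1..N} {1..N}" and "N1 \<le> N"
  shows "Pr_cre N N1 (\<lambda>S. P (\<pi> ` S)) = Pr_cre N N1 P"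
proof -
  let ?C = "cre N N1"
  have inj\<pi>: "inj_on \<pi> {1..N}" using \<pi> by (simp add: bij_betw_def)
  have inj: "inj_on (image \<pi>) ?C"
    by (rule inj_on_image, rule inj_on_subset[OF inj\<pi>]) (auto simp: cre_def)
  have "image \<pi> ` ?C \<subseteq> ?C"
  proof
    fix T assume "T \<in> image \<pi> ` ?C"
    then obtain S where S: "S \<in> ?C" "T = \<pi> ` S" by blast
    then have S': "S \<subseteq> {1..N}" "card S = N1" using creD by auto
    then have "card (\<pi> ` S) = N1" using card_image[OF inj_on_subset[OF inj\<pi> S'(1)]] by simp
    moreover have "\<pi> ` S \<subseteq> {1..N}" using image_mono[OF S'(1), of \<pi>] \<pi> by (simp add: bij_betw_def)
    ultimately show "T \<in> ?C" unfolding S(2) cre_def by simp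
  qed
  then have im: "image \<pi> ` ?C = ?C"
    by (rule card_subset_eq[OF finite_cre]) (simp add: card_image[OF inj])
  have "image \<pi> ` {S\<in>?C. P (\<pi> ` S)} = {T\<in>image \<pi> ` ?C. P T}" by blast
  then have "{S\<in>?C. P S} = image \<pi> ` {S\<in>?C. P (\<pi> ` S)}" unfolding im by simp
  moreover have "card (image \<pi> ` {S\<in>?C. P (\<pi> ` S)}) = card {S\<in>?C. P (\<pi> ` S)}"
    by (rule card_image, rule inj_on_subset[OF inj]) auto
  ultimately show ?thesis unfolding Pr_cre_eq_card[OF assms(2)] by simp
qed

lemma card_cre_Int_eq:
  assumes A: "A \<subseteq> {1..N}" "card A = n"
  shows "card {S\<in>cre N N1. card (S\<inter>A) = j} =
     (if j \<le> N1 then (n choose j) * ((N - n) choose (N1 - j)) else 0)"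
proof (cases "j \<le> N1")
  case False
  have "card (S\<inter>A) \<le> N1" if "S \<in> cre N N1" for S
    using creD[OF that] by (metis card_mono inf_le1)
  then have empty: "{S\<in>cre N N1. card (S\<inter>A) = j} = {}" using False by auto
  show ?thesis unfolding empty using False by simp
next
  case True
  define D where "D = {1..N} - A"
  have fA: "finite A" using A(1) finite_subset by blast
  have cD: "card D = N - n" unfolding D_def using A fA by (simp add: card_Diff_subset)
  let ?X = "{S\<in>cre N N1. card (S\<inter>A) = j}"
  let ?Y = "{B. B \<subseteq> A \<and> card B = j} \<times> {C. C \<subseteq> D \<and> card C = N1 - j}"
  have "bij_betw (\<lambda>S. (S \<inter> A, S - A)) ?X ?Y"
  proof (rule bij_betw_byWitness[where f' = "\<lambda>(B,C). B \<union> C"])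
    show "\<forall>S\<in>?X. (\<lambda>(B,C). B \<union> C) (S\<inter>A, S-A) = S" by auto
    show "\<forall>p\<in>?Y. (\<lambda>S. (S \<inter> A, S - A)) ((\<lambda>(B,C). B \<union> C) p) = p" using D_def by auto
    show "(\<lambda>S. (S \<inter> A, S - A)) ` ?X \<subseteq> ?Y"
    proof safe
      fix S assume "S \<in> cre N N1"
      then have S: "finite S" "card S = N1" "S \<subseteq> {1..N}" using creD by auto
      then show "card (S - A) = N1 - card (S \<inter> A)" by (simp add: card_Diff_subset_Int)
      fix x assume "x \<in> S" "x \<notin> A"
      then show "x \<in> D" using S(3) D_def by auto
    qed
    show "(\<lambda>(B,C). B \<union> C) ` ?Y \<subseteq> ?X"
    proof safe
      fix B C assume B: "B \<subseteq> A" "j = card B" and C: "C \<subseteq> D" "card C = N1 - card B"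
      have "B \<inter> C = {}" "finite B" "finite C"
        using B C fA D_def finite_subset[of C "{1..N}"] finite_subset[of B A] by auto
      then have "card (B \<union> C) = N1" using card_Un_disjoint[of B C] C True B by simp
      moreover have "B \<union> C \<subseteq> {1..N}" using B C A D_def by auto
      ultimately show "B \<union> C \<in> cre N N1" unfolding cre_def by simp
      have "(B \<union> C) \<inter> A = B" using B C D_def by auto
      then show "card ((B \<union> C) \<inter> A) = card B" by simp
    qed
  qed
  then have "card ?X = card ?Y" by (rule bij_betw_same_card)
  also have "\<dots> = (n choose j) * ((N - n) choose (N1 - j))"
    using n_subsets[OF fA] n_subsets[of D] A cD by (simp add: card_cartesian_product D_def)
  finally show ?thesis using True by simp
qed

lemma Pr_cre_card_Int_ge:
  assumes "A \<subseteq> {1..N}" "card A = n" "N1 \<le> N"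
  shows "Pr_cre N N1 (\<lambda>S. x \<le> card (S\<inter>A)) = G_H x N n N1"
proof -
  have "card (S\<inter>A) \<le> N1" if "S \<in> cre N N1" for S
    using creD[OF that] by (metis card_mono inf_le1)
  then have "{S\<in>cre N N1. x \<le> card (S\<inter>A)} = (\<Union>j\<in>{x..N1}. {S\<in>cre N N1. card (S\<inter>A) = j})"
    by auto
  then have "card {S\<in>cre N N1. x \<le> card (S\<inter>A)} =
      (\<Sum>j\<in>{x..N1}. card {S\<in>cre N N1. card (S\<inter>A) = j})"
    by (simp only:) (rule card_UN_disjoint; auto intro: finite_subset[OF _ finite_cre])
  then show ?thesis unfolding Pr_cre_eq_card[OF assms(3)] G_H_def hyp_pmf_def
    by (simp add: card_cre_Int_eq[OF assms(1,2)] sum_divide_distrib)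
qed

section \<open>The hypergeometric tail and quantile\<close>

lemma G_H_antimono: "x \<le> x' \<Longrightarrow> G_H x' N n N1 \<le> G_H x N n N1"
  unfolding G_H_def by (rule sum_mono2) (auto simp: hyp_pmf_def)

lemma hyp_cdf_mono: "x \<le> x' \<Longrightarrow> hyp_cdf x N n N1 \<le> hyp_cdf x' N n N1"
  unfolding hyp_cdf_def by (rule sum_mono2) (auto simp: hyp_pmf_def)

lemma hyp_cdf_add_G_H_Suc: "hyp_cdf x N n N1 + G_H (Suc x) N n N1 = G_H 0 N n N1"
proof -
  have G_H_upt: "G_H y N n N1 = (\<Sum>j\<in>{y..<Suc (N1 + x)}. hyp_pmf N n N1 j)" for y
    unfolding G_H_def by (rule sum.mono_neutral_left) (auto simp: hyp_pmf_def)
  have "hyp_cdf x N n N1 = (\<Sum>j\<in>{0..<Suc x}. hyp_pmf N n N1 j)"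
    unfolding hyp_cdf_def by (simp add: atLeast0LessThan lessThan_Suc_atMost)
  then show ?thesis unfolding G_H_upt by (simp only:) (rule sum.atLeastLessThan_concat; simp)
qed

text \<open>Vandermonde's identity, read off from the count of all assignments.\<close>

lemma G_H_0: assumes "n \<le> N" "N1 \<le> N" shows "G_H 0 N n N1 = 1"
proof -
  have "G_H 0 N n N1 = Pr_cre N N1 (\<lambda>S. 0 \<le> card (S\<inter>{1..n}))"
    using Pr_cre_card_Int_ge[of "{1..n}" N n N1 0] assms by simp
  also have "\<dots> = 1" unfolding Pr_cre_eq_card[OF assms(2)] card_cre[symmetric]
    using cre_nonempty[OF assms(2)] finite_cre[of N N1] by simp
  finally show ?thesis .
qed

lemma G_H_Suc_eq: "n \<le> N \<Longrightarrow> N1 \<le> N \<Longrightarrow> G_H (Suc x) N n N1 = 1 - hyp_cdf x N n N1"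
  using hyp_cdf_add_G_H_Suc[of x N n N1] G_H_0[of n N N1] by simp

lemma G_H_mono_marked:
  assumes "n' \<le> n" "n \<le> N" "N1 \<le> N"
  shows "G_H x N n' N1 \<le> G_H x N n N1"
proof -
  have "G_H x N n' N1 = Pr_cre N N1 (\<lambda>S. x \<le> card (S\<inter>{1..n'}))"
    using Pr_cre_card_Int_ge[of "{1..n'}" N n' N1 x] assms by simp
  also have "\<dots> \<le> Pr_cre N N1 (\<lambda>S. x \<le> card (S\<inter>{1..n}))"
    using assms by (intro Pr_cre_mono) (auto elim!: order_trans intro!: card_mono)
  also have "\<dots> = G_H x N n N1"
    using Pr_cre_card_Int_ge[of "{1..n}" N n N1 x] assms by simp
  finally show ?thesis .
qed

lemma
  assumes "n \<le> N" "N1 \<le> N" "0 < \<alpha>"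
  shows Q_H_le: "Q_H (1 - \<alpha>) N n N1 \<le> N1"
    and hyp_cdf_Q_H_ge: "1 - \<alpha> \<le> hyp_cdf (Q_H (1 - \<alpha>) N n N1) N n N1"
proof -
  have "1 - \<alpha> \<le> hyp_cdf N1 N n N1"
    using G_H_Suc_eq[OF assms(1,2), of N1] assms(3) by (simp add: G_H_def)
  then show "Q_H (1 - \<alpha>) N n N1 \<le> N1" "1 - \<alpha> \<le> hyp_cdf (Q_H (1 - \<alpha>) N n N1) N n N1"
    unfolding Q_H_def by (auto intro: Least_le LeastI)
qed

lemma G_H_gt_iff_le_Q_H:
  assumes "n \<le> N" "N1 \<le> N" "0 < \<alpha>" "\<alpha> < 1"
  shows "\<alpha> < G_H m N n N1 \<longleftrightarrow> m \<le> Q_H (1 - \<alpha>) N n N1"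
proof (cases m)
  case 0
  then show ?thesis using G_H_0[OF assms(1,2)] assms by simp
next
  case (Suc x)
  have "hyp_cdf x N n N1 < 1 - \<alpha> \<longleftrightarrow> x < Q_H (1 - \<alpha>) N n N1"
  proof
    assume "hyp_cdf x N n N1 < 1 - \<alpha>"
    then show "x < Q_H (1 - \<alpha>) N n N1"
      using hyp_cdf_Q_H_ge[OF assms(1-3)] hyp_cdf_mono[of "Q_H (1 - \<alpha>) N n N1" x N n N1]
      by (cases "Q_H (1 - \<alpha>) N n N1 \<le> x") auto
  next
    assume "x < Q_H (1 - \<alpha>) N n N1"
    then show "hyp_cdf x N n N1 < 1 - \<alpha>" unfolding Q_H_def using not_less_Least by fastforce
  qed
  then show ?thesis using G_H_Suc_eq[OF assms(1,2)] Suc by auto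
qed

section \<open>Order statistics\<close>

lemma sorted_nth_le_iff_card_greater:
  assumes "sorted L" "length L = m" "1 \<le> j" "j \<le> m"
  shows "L ! (j - 1) \<le> c \<longleftrightarrow> card {i. i < m \<and> c < L ! i} \<le> m - j"
proof
  assume le: "L ! (j - 1) \<le> c"
  have "{i. i < m \<and> c < L ! i} \<subseteq> {j..<m}"
  proof
    fix i assume "i \<in> {i. i < m \<and> c < L ! i}"
    then have i: "i < m" "c < L ! i" by auto
    have "j \<le> i"
    proof (rule ccontr)
      assume "\<not> j \<le> i"
      then have "L ! i \<le> L ! (j - 1)" using assms by (intro sorted_nth_mono) auto
      with le i show False by simp
    qed
    then show "i \<in> {j..<m}" using i by simp
  qed
  then have "card {i. i < m \<and> c < L ! i} \<le> card {j..<m}" by (intro card_mono) auto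
  then show "card {i. i < m \<and> c < L ! i} \<le> m - j" by simp
next
  assume le: "card {i. i < m \<and> c < L ! i} \<le> m - j"
  show "L ! (j - 1) \<le> c"
  proof (rule ccontr)
    assume "\<not> L ! (j - 1) \<le> c"
    moreover have "L ! (j - 1) \<le> L ! i" if "j - 1 \<le> i" "i < m" for i
      using assms that by (intro sorted_nth_mono) auto
    ultimately have "{j - 1..<m} \<subseteq> {i. i < m \<and> c < L ! i}" by force
    then have "card {j - 1..<m} \<le> card {i. i < m \<and> c < L ! i}" by (intro card_mono) auto
    with le assms show False by simp
  qed
qed

lemma kth_smallest_le_iff:
  assumes "finite S" "card S = m" "1 \<le> j" "j \<le> m"
  shows "kth_smallest f S j \<le> c \<longleftrightarrow> card {i\<in>S. c < f i} \<le> m - j"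
proof -
  let ?xs = "sorted_list_of_set S"
  let ?L = "sort (map f ?xs)"
  have len: "length ?L = m" using assms by simp
  have "card {i. i < m \<and> c < ?L ! i} = length (filter (\<lambda>y. c < y) ?L)"
    using len by (simp add: length_filter_conv_card)
  also have "\<dots> = length (filter (\<lambda>y. c < y) (map f ?xs))"
    by (metis mset_filter mset_sort size_mset)
  also have "\<dots> = card {i\<in>S. c < f i}"
    using assms(1) by (simp add: filter_map o_def distinct_length_filter Int_def conj_commute)
  finally show ?thesis unfolding kth_smallest_def
    using sorted_nth_le_iff_card_greater[OF sorted_sort len assms(3,4), of c] by simp
qed

lemma obtain_sorting_bij:
  fixes f :: "nat \<Rightarrow> real"
  obtains \<pi> where "bij_betw \<pi> {1..N} {1..N}"
    and "\<And>m. m \<in> {1..N} \<Longrightarrow> f (\<pi> m) = kth_smallest f {1..N} m"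
proof -
  define xs where "xs = map f [1..<Suc N]"
  have len: "length (sort xs) = N" "length xs = N" unfolding xs_def by simp_all
  have "sorted_list_of_set {1..N} = [1..<Suc N]"
    by (metis atLeastLessThanSuc_atLeastAtMost sorted_list_of_set_range)
  then have kth: "kth_smallest f {1..N} m = sort xs ! (m - 1)" for m
    by (simp add: kth_smallest_def xs_def)
  have "mset (sort xs) = mset xs" by simp
  from permutation_Ex_bij[OF this] obtain g
    where g: "bij_betw g {..<N} {..<N}" "\<forall>i<N. sort xs ! i = xs ! g i"
    unfolding len by blast
  have "bij_betw (\<lambda>i. i - 1) {1..N} {..<N}"
    by (rule bij_betw_byWitness[where f' = Suc]) auto
  moreover have "bij_betw Suc {..<N} {1..N}"
    by (rule bij_betw_byWitness[where f' = "\<lambda>i. i - 1"]) auto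
  ultimately have "bij_betw (Suc \<circ> (g \<circ> (\<lambda>i. i - 1))) {1..N} {1..N}"
    using g(1) by (blast intro: bij_betw_trans)
  moreover have "f ((Suc \<circ> (g \<circ> (\<lambda>i. i - 1))) m) = kth_smallest f {1..N} m"
    if "m \<in> {1..N}" for m
  proof -
    have "g (m - 1) < N" using g(1) that by (auto simp: bij_betw_def)
    then have "f (Suc (g (m - 1))) = xs ! g (m - 1)" by (simp add: xs_def del: upt_Suc)
    moreover have "m - 1 < N" using that by auto
    ultimately have "f (Suc (g (m - 1))) = sort xs ! (m - 1)" using g(2) by simp
    then show ?thesis unfolding kth by simp
  qed
  ultimately show ?thesis using that by blast
qed

lemma greater_kth_smallest_subset_image:
  assumes \<pi>: "bij_betw \<pi> {1..N} {1..N}"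
    and sorts: "\<And>m. m \<in> {1..N} \<Longrightarrow> f (\<pi> m) = kth_smallest f {1..N} m"
    and "1 \<le> k" "k \<le> N" "kth_smallest f {1..N} k \<le> c"
  shows "{i\<in>{1..N}. c < f i} \<subseteq> \<pi> ` {k<..N}"
proof safe
  fix i assume i: "i \<in> {1..N}" "c < f i"
  have "i \<in> \<pi> ` {1..N}" using \<pi> i(1) by (simp add: bij_betw_def)
  then obtain m where m: "m \<in> {1..N}" "i = \<pi> m" by blast
  have "\<not> m \<le> k"
  proof
    assume "m \<le> k"
    then have "kth_smallest f {1..N} m \<le> kth_smallest f {1..N} k"
      unfolding kth_smallest_def using m assms(4) by (intro sorted_nth_mono) auto
    with i(2) m sorts assms(5) show False by simp
  qed
  then show "i \<in> \<pi> ` {k<..N}" using m by auto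
qed

section \<open>The p-value p_{k,c}\<close>

lemma ncnt_le_card_Int:
  assumes "S \<in> cre N N1" "\<forall>i\<in>{1..N}. Y0 i \<le> 0"
    and "{i\<in>{1..N}. c < tau Y1 Y0 i} \<subseteq> A"
  shows "ncnt Y1 Y0 S c \<le> card (S\<inter>A)"
  unfolding ncnt_def
proof (rule card_mono)
  show "finite (S\<inter>A)" using creD[OF assms(1)] by auto
  show "{i\<in>S. c < obs Y1 Y0 S i} \<subseteq> S \<inter> A"
    using creD[OF assms(1)] assms(2,3) by (force simp: obs_def tau_def)
qed

lemma pH_gt_iff_ncnt_le_Q_H:
  assumes "N1 \<le> N" "0 < \<alpha>" "\<alpha> < 1"
  shows "\<alpha> < pH Y1 Y0 N N1 S k c \<longleftrightarrow> ncnt Y1 Y0 S c \<le> Q_H (1 - \<alpha>) N (N - k) N1"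
  unfolding pH_def using assms by (intro G_H_gt_iff_le_Q_H) auto

lemma y_ord_kalpha_le_iff:
  assumes S: "S \<in> cre N N1" and "N1 \<le> N" "0 < \<alpha>"
  shows "y_ord Y1 Y0 S (kalpha \<alpha> N N1 k) \<le> ereal c \<longleftrightarrow>
    ncnt Y1 Y0 S c \<le> Q_H (1 - \<alpha>) N (N - k) N1"
proof -
  let ?Q = "Q_H (1 - \<alpha>) N (N - k) N1"
  have Q: "?Q \<le> N1" using Q_H_le[of "N - k" N N1 \<alpha>] assms by simp
  have fin: "finite S" "card S = N1" using creD[OF S] by auto
  show ?thesis
  proof (cases "?Q = N1")
    case True
    have "ncnt Y1 Y0 S c \<le> card S" unfolding ncnt_def by (rule card_mono[OF fin(1)]) auto
    then show ?thesis using True fin by (simp add: y_ord_def kalpha_def)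
  next
    case False
    then have "y_ord Y1 Y0 S (kalpha \<alpha> N N1 k) \<le> ereal c \<longleftrightarrow>
        kth_smallest (obs Y1 Y0 S) S (N1 - ?Q) \<le> c"
      using Q by (simp add: y_ord_def kalpha_def)
    also have "\<dots> \<longleftrightarrow> card {i\<in>S. c < obs Y1 Y0 S i} \<le> N1 - (N1 - ?Q)"
      using False Q by (intro kth_smallest_le_iff[OF fin]) auto
    finally show ?thesis using Q unfolding ncnt_def by simp
  qed
qed

lemma pH_gt_iff_y_ord_le:
  assumes "S \<in> cre N N1" "N1 \<le> N" "0 < \<alpha>" "\<alpha> < 1"
  shows "\<alpha> < pH Y1 Y0 N N1 S k c \<longleftrightarrow> y_ord Y1 Y0 S (kalpha \<alpha> N N1 k) \<le> ereal c"
  using pH_gt_iff_ncnt_le_Q_H y_ord_kalpha_le_iff assms by simp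

lemma pH_mono_threshold:
  assumes "S \<in> cre N N1" "c \<le> c'"
  shows "pH Y1 Y0 N N1 S k c \<le> pH Y1 Y0 N N1 S k c'"
proof -
  have "ncnt Y1 Y0 S c' \<le> ncnt Y1 Y0 S c" unfolding ncnt_def
    using creD[OF assms(1)] assms(2) by (intro card_mono) auto
  then show ?thesis unfolding pH_def by (rule G_H_antimono)
qed

lemma pH_antimono_rank:
  "N1 \<le> N \<Longrightarrow> k \<le> k' \<Longrightarrow> pH Y1 Y0 N N1 S k' c \<le> pH Y1 Y0 N N1 S k c"
  unfolding pH_def by (rule G_H_mono_marked) auto

lemma Pr_pH_le_if_superset:
  assumes N: "N1 \<le> N" and A: "A \<subseteq> {1..N}" "card A = N - k"
    and Y0: "\<forall>i\<in>{1..N}. Y0 i \<le> 0" and c: "{i\<in>{1..N}. c < tau Y1 Y0 i} \<subseteq> A"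
    and \<alpha>: "0 < \<alpha>" "\<alpha> < 1"
  shows "Pr_cre N N1 (\<lambda>S. pH Y1 Y0 N N1 S k c \<le> \<alpha>) \<le> \<alpha>"
proof -
  let ?Q = "Q_H (1 - \<alpha>) N (N - k) N1"
  have "Pr_cre N N1 (\<lambda>S. pH Y1 Y0 N N1 S k c \<le> \<alpha>) \<le> Pr_cre N N1 (\<lambda>S. Suc ?Q \<le> card (S\<inter>A))"
  proof (rule Pr_cre_mono[OF N])
    fix S assume S: "S \<in> cre N N1" "pH Y1 Y0 N N1 S k c \<le> \<alpha>"
    then have "\<not> ncnt Y1 Y0 S c \<le> ?Q" using pH_gt_iff_ncnt_le_Q_H[OF N \<alpha>] by (meson not_le)
    with ncnt_le_card_Int[OF S(1) Y0 c] show "Suc ?Q \<le> card (S\<inter>A)" by simp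
  qed
  also have "\<dots> = 1 - hyp_cdf ?Q N (N - k) N1"
    using Pr_cre_card_Int_ge[OF A N] G_H_Suc_eq[OF _ N] by simp
  also have "\<dots> \<le> \<alpha>" using hyp_cdf_Q_H_ge[OF _ N \<alpha>(1), of "N - k"] by simp
  finally show ?thesis .
qed

lemma Pr_pH_le:
  assumes "N1 \<le> N" "\<forall>i\<in>{1..N}. Y0 i \<le> 0"
    and "1 \<le> k" "k \<le> N" "tau_ord Y1 Y0 N k \<le> c" "0 < \<alpha>" "\<alpha> < 1"
  shows "Pr_cre N N1 (\<lambda>S. pH Y1 Y0 N N1 S k c \<le> \<alpha>) \<le> \<alpha>"
proof -
  obtain \<pi> where \<pi>: "bij_betw \<pi> {1..N} {1..N}"
    and sorts: "\<And>m. m \<in> {1..N} \<Longrightarrow> tau Y1 Y0 (\<pi> m) = kth_smallest (tau Y1 Y0) {1..N} m"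
    using obtain_sorting_bij[of N "tau Y1 Y0"] by blast
  have "{i\<in>{1..N}. c < tau Y1 Y0 i} \<subseteq> \<pi> ` {k<..N}"
    using assms(3-5) by (intro greater_kth_smallest_subset_image[OF \<pi> sorts]) (auto simp: tau_ord_def)
  moreover have "inj_on \<pi> {k<..N}"
    by (rule inj_on_subset[of \<pi> "{1..N}"]) (use \<pi> in \<open>auto simp: bij_betw_def\<close>)
  then have "card (\<pi> ` {k<..N}) = N - k" by (simp add: card_image)
  moreover have "\<pi> ` {k<..N} \<subseteq> {1..N}" using \<pi> by (auto simp: bij_betw_def)
  ultimately show ?thesis using assms by (intro Pr_pH_le_if_superset) auto
qed

lemma Pr_y_ord_kalpha_le_tau_ord:
  assumes "N1 \<le> N" "\<forall>i\<in>{1..N}. Y0 i \<le> 0" "1 \<le> k" "k \<le> N" "0 < \<alpha>" "\<alpha> < 1"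
  shows "1 - \<alpha> \<le> Pr_cre N N1 (\<lambda>S. y_ord Y1 Y0 S (kalpha \<alpha> N N1 k) \<le> ereal (tau_ord Y1 Y0 N k))"
proof -
  let ?t = "tau_ord Y1 Y0 N k"
  have "1 - \<alpha> \<le> 1 - Pr_cre N N1 (\<lambda>S. pH Y1 Y0 N N1 S k ?t \<le> \<alpha>)"
    using Pr_pH_le assms by simp
  also have "\<dots> = Pr_cre N N1 (\<lambda>S. \<not> pH Y1 Y0 N N1 S k ?t \<le> \<alpha>)"
    by (rule Pr_cre_not[OF assms(1), symmetric])
  also have "\<dots> = Pr_cre N N1 (\<lambda>S. y_ord Y1 Y0 S (kalpha \<alpha> N N1 k) \<le> ereal ?t)"
    using assms by (intro Pr_cre_cong) (simp_all add: not_le pH_gt_iff_y_ord_le)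
  finally show ?thesis .
qed

lemma pH_gt_ranks_eq:
  assumes S: "S \<in> cre N N1" and N: "N1 \<le> N" and "0 < \<alpha>" "\<alpha> < 1"
  shows "{N - k | k. k \<le> N \<and> pH Y1 Y0 N N1 S k c > \<alpha>} = {n_ca Y1 Y0 N N1 S c \<alpha>..N}"
proof -
  let ?K = "{k. k \<le> N \<and> pH Y1 Y0 N N1 S k c > \<alpha>}"
  define M where "M = Max ?K"
  have "ncnt Y1 Y0 S c \<le> N1" unfolding ncnt_def using creD[OF S]
    by (metis (no_types, lifting) card_mono mem_Collect_eq subsetI)
  then have "G_H N1 N N N1 \<le> pH Y1 Y0 N N1 S 0 c" unfolding pH_def by (simp add: G_H_antimono)
  moreover have "G_H N1 N N N1 = 1" unfolding G_H_def hyp_pmf_def using N by simp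
  ultimately have "0 \<in> ?K" using assms(4) by simp
  moreover have fin: "finite ?K" by (rule finite_subset[of _ "{..N}"]) auto
  ultimately have M: "M \<in> ?K" "\<And>k. k \<in> ?K \<Longrightarrow> k \<le> M"
    unfolding M_def using Max_in Max_ge by blast+
  have K: "?K = {..M}"
    using M pH_antimono_rank[OF N, of _ M Y1 Y0 S c] by fastforce
  have "n_ca Y1 Y0 N N1 S c \<alpha> = N - M" unfolding n_ca_def M_def pH_def ..
  moreover have "{N - k | k. k \<in> {..M}} = {N - M..N}" (is "?L = ?R")
  proof
    show "?L \<subseteq> ?R" by auto
    show "?R \<subseteq> ?L"
    proof
      fix x assume "x \<in> ?R"
      then have "x = N - (N - x)" "N - x \<in> {..M}" by auto
      then show "x \<in> ?L" by blast
    qed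
  qed
  moreover have "{N - k | k. k \<le> N \<and> pH Y1 Y0 N N1 S k c > \<alpha>} = {N - k | k. k \<in> {..M}}"
    using K by blast
  ultimately show ?thesis by simp
qed

lemma Pr_Ncnt_in_pH_gt_ranks:
  assumes N: "N1 \<le> N" and Y0: "\<forall>i\<in>{1..N}. Y0 i \<le> 0" and \<alpha>: "0 < \<alpha>" "\<alpha> < 1"
  shows "1 - \<alpha> \<le> Pr_cre N N1 (\<lambda>S. Ncnt Y1 Y0 N c \<in> {N - k | k. k \<le> N \<and> pH Y1 Y0 N N1 S k c > \<alpha>})"
proof -
  let ?A = "{i\<in>{1..N}. c < tau Y1 Y0 i}"
  let ?k = "N - Ncnt Y1 Y0 N c"
  have "card ?A \<le> card {1..N}" by (rule card_mono) auto
  then have "Ncnt Y1 Y0 N c \<le> N" unfolding Ncnt_def by simp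
  then have A: "card ?A = N - ?k" "Ncnt Y1 Y0 N c = N - ?k" unfolding Ncnt_def by simp_all
  have "Pr_cre N N1 (\<lambda>S. pH Y1 Y0 N N1 S ?k c \<le> \<alpha>) \<le> \<alpha>"
    by (rule Pr_pH_le_if_superset[OF N _ A(1) Y0 order_refl \<alpha>]) auto
  then have "1 - \<alpha> \<le> 1 - Pr_cre N N1 (\<lambda>S. pH Y1 Y0 N N1 S ?k c \<le> \<alpha>)" by simp
  also have "\<dots> = Pr_cre N N1 (\<lambda>S. \<not> pH Y1 Y0 N N1 S ?k c \<le> \<alpha>)"
    by (rule Pr_cre_not[OF N, symmetric])
  also have "\<dots> \<le> Pr_cre N N1 (\<lambda>S. Ncnt Y1 Y0 N c \<in> {N - k | k. k \<le> N \<and> pH Y1 Y0 N N1 S k c > \<alpha>})"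
    using A(2) by (intro Pr_cre_mono[OF N]) (auto simp: not_le)
  finally show ?thesis .
qed

text \<open>Relabelling the units by the sorting permutation \<pi> turns the events
  n(\<tau>_(k)) > Q_k, which live on the random sets \<pi>{k+1..N}, into events on the fixed
  sets {k+1..N}.\<close>

lemma Pr_all_y_ord_kalpha_le_tau_ord:
  assumes N: "N1 \<le> N" and Y0: "\<forall>i\<in>{1..N}. Y0 i \<le> 0" and K: "K \<subseteq> {1..N}" and \<alpha>: "0 < \<alpha>"
  shows "1 - Pr_cre N N1 (\<lambda>S. \<exists>k\<in>K. Q_H (1 - \<alpha>) N (N - k) N1 < card {i\<in>S. k < i})
    \<le> Pr_cre N N1 (\<lambda>S. \<forall>k\<in>K. y_ord Y1 Y0 S (kalpha \<alpha> N N1 k) \<le> ereal (tau_ord Y1 Y0 N k))"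
proof -
  let ?Q = "\<lambda>k. Q_H (1 - \<alpha>) N (N - k) N1"
  obtain \<pi> where \<pi>: "bij_betw \<pi> {1..N} {1..N}"
    and sorts: "\<And>m. m \<in> {1..N} \<Longrightarrow> tau Y1 Y0 (\<pi> m) = kth_smallest (tau Y1 Y0) {1..N} m"
    using obtain_sorting_bij[of N "tau Y1 Y0"] by blast
  have inj\<pi>: "inj_on \<pi> {1..N}" using \<pi> by (simp add: bij_betw_def)
  have "Pr_cre N N1 (\<lambda>S. \<not> (\<forall>k\<in>K. y_ord Y1 Y0 S (kalpha \<alpha> N N1 k) \<le> ereal (tau_ord Y1 Y0 N k)))
      \<le> Pr_cre N N1 (\<lambda>S. \<exists>k\<in>K. ?Q k < card (S \<inter> \<pi> ` {k<..N}))"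
  proof (rule Pr_cre_mono[OF N])
    fix S assume S: "S \<in> cre N N1"
      and "\<not> (\<forall>k\<in>K. y_ord Y1 Y0 S (kalpha \<alpha> N N1 k) \<le> ereal (tau_ord Y1 Y0 N k))"
    then obtain k where k: "k \<in> K" "?Q k < ncnt Y1 Y0 S (tau_ord Y1 Y0 N k)"
      using y_ord_kalpha_le_iff[OF S N \<alpha>] by (auto simp: not_le)
    have "{i\<in>{1..N}. tau_ord Y1 Y0 N k < tau Y1 Y0 i} \<subseteq> \<pi> ` {k<..N}"
      using k(1) K by (intro greater_kth_smallest_subset_image[OF \<pi> sorts]) (auto simp: tau_ord_def)
    with k show "\<exists>k\<in>K. ?Q k < card (S \<inter> \<pi> ` {k<..N})"
      using ncnt_le_card_Int[OF S Y0] by (meson order.strict_trans2)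
  qed
  also have "\<dots> = Pr_cre N N1 (\<lambda>S. \<exists>k\<in>K. ?Q k < card (\<pi> ` S \<inter> \<pi> ` {k<..N}))"
    by (rule Pr_cre_image_bij[OF \<pi> N, symmetric])
  also have "\<dots> = Pr_cre N N1 (\<lambda>S. \<exists>k\<in>K. ?Q k < card {i\<in>S. k < i})"
  proof (rule Pr_cre_cong[OF N])
    fix S assume "S \<in> cre N N1"
    then have "S \<subseteq> {1..N}" using creD by blast
    have "card (\<pi> ` S \<inter> \<pi> ` {k<..N}) = card {i\<in>S. k < i}" for k
    proof -
      have "{k<..N} \<subseteq> {1..N}" by auto
      then have "\<pi> ` S \<inter> \<pi> ` {k<..N} = \<pi> ` (S \<inter> {k<..N})"
        using inj_on_image_Int[OF inj\<pi> \<open>S \<subseteq> {1..N}\<close>] by simp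
      moreover have "inj_on \<pi> (S \<inter> {k<..N})"
        by (rule inj_on_subset[OF inj\<pi>]) (use \<open>S \<subseteq> {1..N}\<close> in auto)
      moreover have "S \<inter> {k<..N} = {i\<in>S. k < i}" using \<open>S \<subseteq> {1..N}\<close> by auto
      ultimately show ?thesis by (simp add: card_image)
    qed
    then show "(\<exists>k\<in>K. ?Q k < card (\<pi> ` S \<inter> \<pi> ` {k<..N})) = (\<exists>k\<in>K. ?Q k < card {i\<in>S. k < i})"
      by simp
  qed
  finally show ?thesis unfolding Pr_cre_not[OF N] by simp
qed

theorem proposition4:
  fixes Y1 Y0 :: "nat \<Rightarrow> real" and N N1 :: nat
  assumes "1 \<le> N1" and "N1 < N"
    and "\<forall>i\<in>{1..N}. Y0 i \<le> 0"
  shows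
   "(\<forall>k c \<alpha>. 1 \<le> k \<and> k \<le> N \<and> tau_ord Y1 Y0 N k \<le> c \<and> 0 < \<alpha> \<and> \<alpha> < 1 \<longrightarrow>
        Pr_cre N N1 (\<lambda>S. pH Y1 Y0 N N1 S k c \<le> \<alpha>) \<le> \<alpha>)
  \<and> (\<forall>S\<in>cre N N1. \<forall>k c c'. 1 \<le> k \<and> k \<le> N \<and> c \<le> c' \<longrightarrow>
        pH Y1 Y0 N N1 S k c \<le> pH Y1 Y0 N N1 S k c')
  \<and> (\<forall>S\<in>cre N N1. \<forall>k k' c. 1 \<le> k \<and> k \<le> k' \<and> k' \<le> N \<longrightarrow>
        pH Y1 Y0 N N1 S k' c \<le> pH Y1 Y0 N N1 S k c)
  \<and> (\<forall>S\<in>cre N N1. \<forall>k \<alpha>. 1 \<le> k \<and> k \<le> N \<and> 0 < \<alpha> \<and> \<alpha> < 1 \<longrightarrow>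
        {c. pH Y1 Y0 N N1 S k c > \<alpha>} = {c. y_ord Y1 Y0 S (kalpha \<alpha> N N1 k) \<le> ereal c})
  \<and> (\<forall>k \<alpha>. 1 \<le> k \<and> k \<le> N \<and> 0 < \<alpha> \<and> \<alpha> < 1 \<longrightarrow>
        Pr_cre N N1 (\<lambda>S. y_ord Y1 Y0 S (kalpha \<alpha> N N1 k) \<le> ereal (tau_ord Y1 Y0 N k)) \<ge> 1 - \<alpha>)
  \<and> (\<forall>S\<in>cre N N1. \<forall>c \<alpha>. 0 < \<alpha> \<and> \<alpha> < 1 \<longrightarrow>
        {N - k | k. k \<le> N \<and> pH Y1 Y0 N N1 S k c > \<alpha>} = {n_ca Y1 Y0 N N1 S c \<alpha>..N})
  \<and> (\<forall>c \<alpha>. 0 < \<alpha> \<and> \<alpha> < 1 \<longrightarrow>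
        Pr_cre N N1 (\<lambda>S. Ncnt Y1 Y0 N c \<in> {N - k | k. k \<le> N \<and> pH Y1 Y0 N N1 S k c > \<alpha>})
          \<ge> 1 - \<alpha>)
  \<and> (\<forall>ks \<alpha>. ks \<noteq> [] \<and> sorted ks \<and> (\<forall>k\<in>set ks. 1 \<le> k \<and> k \<le> N) \<and> 0 < \<alpha> \<and> \<alpha> < 1 \<longrightarrow>
        Pr_cre N N1 (\<lambda>S. \<forall>k\<in>set ks. y_ord Y1 Y0 S (kalpha \<alpha> N N1 k) \<le> ereal (tau_ord Y1 Y0 N k))
        \<ge> 1 - Pr_cre N N1 (\<lambda>S. \<exists>k\<in>set ks.
                 card {i\<in>S. k < i} > Q_H (1 - \<alpha>) N (N - k) N1))"
proof -
  have N: "N1 \<le> N" using assms(2) by simp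
  note Y0 = assms(3)
  show ?thesis
    apply (intro conjI allI ballI impI; elim conjE)
    subgoal by (rule Pr_pH_le[OF N Y0])
    subgoal by (rule pH_mono_threshold)
    subgoal by (rule pH_antimono_rank[OF N])
    subgoal using pH_gt_iff_y_ord_le[OF _ N] by blast
    subgoal by (rule Pr_y_ord_kalpha_le_tau_ord[OF N Y0])
    subgoal by (rule pH_gt_ranks_eq[OF _ N])
    subgoal by (rule Pr_Ncnt_in_pH_gt_ranks[OF N Y0])
    subgoal by (rule Pr_all_y_ord_kalpha_le_tau_ord[OF N Y0]) auto
    done
qed

end
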